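(* Let $r \ge 1$ and let $O, A, B, C \subseteq \mathbb{R}^r$ be axis-aligned bounding boxes. If $(A < B \mid O)$ and $(B < C \mid O)$, then $(A < C \mid O)$.
   Context: An axis-aligned bounding box (AABB) in $\mathbb{R}^r$ is a set $M = \prod_{d=1}^r [\check{M}_d, \hat{M}_d]$ with real numbers $\check{M}_d \le \hat{M}_d$ for each $d$ (in particular it is nonempty). $\mathrm{dist}$ is the Euclidean distance. For AABBs $O, E, B$, the relation $(E < B \mid O)$ means $\forall o \in O : \forall e \in E : \forall b \in B : \mathrm{dist}(o, e) < \mathrm{dist}(o, b)$. *)

theory Defs
  imports "HOL-Analysis.Analysis"
begin

definition aabb :: "(real ^ 'n) set \<Rightarrow> bool" where
  "aabb M \<longleftrightarrow> (\<exists>lo hi :: real ^ 'n. (\<forall>d. lo $ d \<le> hi $ d) \<and>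
      M = {x. \<forall>d. lo $ d \<le> x $ d \<and> x $ d \<le> hi $ d})"

definition closer_than :: "(real ^ 'n) set \<Rightarrow> (real ^ 'n) set \<Rightarrow> (real ^ 'n) set \<Rightarrow> bool" where
  "closer_than E B Ob \<longleftrightarrow> (\<forall>p\<in>Ob. \<forall>e\<in>E. \<forall>b\<in>B. dist p e < dist p b)"

end

theory Submission
  imports Defs
begin

lemma aabb_nonempty:
  fixes M :: "(real ^ 'n) set"
  assumes "aabb M"
  shows "M \<noteq> {}"
proof -
  obtain lo hi :: "real ^ 'n" where "\<forall>d. lo $ d \<le> hi $ d"
    and "M = {x. \<forall>d. lo $ d \<le> x $ d \<and> x $ d \<le> hi $ d}"
    using assms unfolding aabb_def by blast
  then have "lo \<in> M" by auto
  then show ?thesis by blast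
qed

lemma closer_than_trans:
  assumes "closer_than A B Ob" and "closer_than B C Ob" and "B \<noteq> {}"
  shows "closer_than A C Ob"
proof -
  obtain b where "b \<in> B" using \<open>B \<noteq> {}\<close> by blast
  with assms(1,2) show ?thesis
    unfolding closer_than_def by (meson less_trans)
qed

theorem lemma4p6:
  fixes Ob A B C :: "(real ^ 'n) set"
  assumes "aabb Ob" and "aabb A" and "aabb B" and "aabb C"
    and "closer_than A B Ob" and "closer_than B C Ob"
  shows "closer_than A C Ob"
  using assms(5,6) aabb_nonempty[OF assms(3)] by (rule closer_than_trans)

end
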